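(* Consider a constrained online convex optimization problem: $\mathcal{F}\subset\mathbb{R}^d$ is a convex set with bounded $\ell_\infty$-diameter $D_\infty=\max_{\boldsymbol{x},\boldsymbol{y}\in\mathcal{F}}\Vert\boldsymbol{x}-\boldsymbol{y}\Vert_\infty$, and $f_1,\dots,f_T$ are convex loss functions with $\Vert\nabla f_t(\boldsymbol{\theta})\Vert_\infty\le G_\infty$ for all $t\in[T]$ and $\boldsymbol{\theta}\in\mathcal{F}$. Let the iterates be generated by AdaSGDMax with step size $\eta_t=\eta D_\infty/(G_\infty\sqrt{t\hat v_t})$ for some $\eta>0$, and assume $\hat v_1>0$. Then the regret $R_T:=\sum_{t=1}^T f_t(\boldsymbol{\theta}_t)-\min_{\boldsymbol{\theta}^*\in\mathcal{F}}\sum_{t=1}^T f_t(\boldsymbol{\theta}^* )$ satisfies $$R_T\le\frac{dD_\infty G_\infty\sqrt{\hat v_T T}}{2\eta}+\frac{dD_\infty G_\infty\eta(2\sqrt{T}-1)}{2\sqrt{\hat v_1}}.$$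
   Context: AdaSGDMax in the online setting: with $\boldsymbol{g}_t=\nabla f_t(\boldsymbol{\theta}_t)$, $v_0=0$, $\hat v_0=0$ and a fixed $\beta_2\in[0,1)$, set $v_t=\beta_2 v_{t-1}+(1-\beta_2)\Vert\boldsymbol{g}_t\Vert_2^2$, $\hat v_t=\max\{\hat v_{t-1},v_t\}$, and $\boldsymbol{\theta}_{t+1}=\Pi_{\mathcal{F}}(\boldsymbol{\theta}_t-\eta_t\boldsymbol{g}_t)$, where $\Pi_{\mathcal{F}}(\boldsymbol{x})=\arg\min_{\boldsymbol{y}\in\mathcal{F}}\Vert\boldsymbol{x}-\boldsymbol{y}\Vert_2$ is Euclidean projection and $\boldsymbol{\theta}_1\in\mathcal{F}$. *)

theory Defs
  imports "HOL-Analysis.Analysis"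
begin

definition linf_diam :: "('a::euclidean_space) set \<Rightarrow> real" where
  "linf_diam F = (SUP x\<in>F. SUP y\<in>F. infnorm (x - y))"

end

theory Submission
  imports Defs
begin

(* By convexity the regret is at most the linearised regret sum_t <g_t, theta_t - theta*>.
   Projection onto F is nonexpansive, so every step satisfies
     <g_t, theta_t - theta*> <= (|theta_t - theta*|^2 - |theta_(t+1) - theta*|^2) / (2 eta_t)
                                + eta_t |g_t|^2 / 2.
   As t * vhat_t is nondecreasing, the step sizes eta_t are nonincreasing and the first terms
   telescope to at most d D^2 / (2 eta_T); as vhat_t >= vhat_1, the second terms are
   O(1 / sqrt t), and sum_(t<=T) 1 / sqrt t <= 2 sqrt T - 1. The l-infinity quantities enter
   through |x|_2^2 <= d |x|_inf^2. *)

lemma convex_on_above_tangent: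
  fixes h :: "'a::real_normed_vector \<Rightarrow> real"
  assumes convex: "convex_on F h" and deriv: "(h has_derivative h') (at x)"
    and "x \<in> F" "y \<in> F"
  shows "h x + h' (y - x) \<le> h y"
proof -
  define \<phi> where "\<phi> = (\<lambda>s::real. h (x + s *\<^sub>R (y - x)))"
  have "\<forall>\<^sub>F s in at_right 0. s \<in> {0<..<1::real}"
    by (rule eventually_at_right_real) simp
  then have quotient_le: "\<forall>\<^sub>F s in at_right 0. (\<phi> s - \<phi> 0) / s \<le> h y - h x"
  proof eventually_elim
    case (elim s)
    then have "\<phi> s \<le> (1 - s) * h x + s * h y"
      unfolding \<phi>_def using convex_onD[OF convex, of s x y] assms(3,4)
      by (simp add: algebra_simps)
    then have "\<phi> s - \<phi> 0 \<le> s * (h y - h x)"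
      by (simp add: \<phi>_def algebra_simps)
    with elim show ?case
      by (simp add: pos_divide_le_eq mult.commute)
  qed
  have line: "((\<lambda>s. x + s *\<^sub>R (y - x)) has_derivative (\<lambda>s. s *\<^sub>R (y - x))) (at 0)"
    by (auto intro!: derivative_eq_intros)
  have "(h has_derivative h') (at (x + 0 *\<^sub>R (y - x)))"
    using deriv by simp
  from has_derivative_compose[OF line this]
  have "(\<phi> has_derivative (\<lambda>s. h' (s *\<^sub>R (y - x)))) (at 0)"
    by (simp add: \<phi>_def o_def)
  moreover have "h' (s *\<^sub>R (y - x)) = s * h' (y - x)" for s
    using deriv by (simp add: has_derivative_def linear_cmul bounded_linear.linear)
  ultimately have "(\<phi> has_real_derivative h' (y - x)) (at 0)"
    by (simp add: has_field_derivative_def mult_commute_abs)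
  then have "((\<lambda>s. (\<phi> s - \<phi> 0) / s) \<longlongrightarrow> h' (y - x)) (at_right 0)"
    by (simp add: has_field_derivative_iff filterlim_at_split)
  from this quotient_le have "h' (y - x) \<le> h y - h x"
    by (rule tendsto_upperbound) simp
  then show ?thesis by simp
qed

lemma sum_inverse_sqrt_le:
  assumes "n \<ge> 1"
  shows "(\<Sum>t=1..n. 1 / sqrt (real t)) \<le> 2 * sqrt (real n) - 1"
  using assms
proof (induction n rule: nat_induct_at_least)
  case base
  then show ?case by simp
next
  case (Suc n)
  have "2 * (sqrt (real n) * sqrt (real n + 1)) \<le> real n + (real n + 1)"
    using sum_squares_bound[of "sqrt (real n)" "sqrt (real n + 1)"]
    by (simp add: power2_eq_square[symmetric])
  then have "1 \<le> (2 * sqrt (real n + 1) - 2 * sqrt (real n)) * sqrt (real n + 1)"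
    by (simp add: algebra_simps)
  then have "1 / sqrt (real (Suc n)) \<le> 2 * sqrt (real (Suc n)) - 2 * sqrt (real n)"
    by (simp add: pos_divide_le_eq add.commute)
  with Suc.IH show ?case by simp
qed

lemma infnorm_le_linf_diam:
  fixes F :: "'a::euclidean_space set"
  assumes "bounded F" "x \<in> F" "y \<in> F"
  shows "infnorm (x - y) \<le> linf_diam F"
proof -
  obtain B where B: "\<And>x. x \<in> F \<Longrightarrow> norm x \<le> B"
    using \<open>bounded F\<close> unfolding bounded_iff by auto
  have bound: "infnorm (x' - y') \<le> 2 * B" if "x' \<in> F" "y' \<in> F" for x' y'
    using infnorm_le_norm[of "x' - y'"] norm_triangle_ineq4[of x' y'] B[OF that(1)] B[OF that(2)]
    by linarith
  have "infnorm (x - y) \<le> (SUP y\<in>F. infnorm (x - y))"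
    using assms bound by (intro cSUP_upper bdd_aboveI2) auto
  also have "\<dots> \<le> linf_diam F"
    unfolding linf_diam_def using assms bound
    by (intro cSUP_upper bdd_aboveI2 cSUP_least) auto
  finally show ?thesis .
qed

lemma infnorm_le_imp_norm_power2_le:
  fixes x :: "'a::euclidean_space" and c :: real
  assumes "infnorm x \<le> c"
  shows "(norm x)\<^sup>2 \<le> DIM('a) * c\<^sup>2"
proof -
  have "norm x \<le> sqrt DIM('a) * infnorm x"
    by (rule norm_le_infnorm)
  also have "\<dots> \<le> sqrt DIM('a) * c"
    using assms by (simp add: mult_left_mono)
  finally have "(norm x)\<^sup>2 \<le> (sqrt DIM('a) * c)\<^sup>2"
    by (rule power_mono) simp
  then show ?thesis
    by (simp add: power_mult_distrib)
qed

lemma closest_point_iterate_in: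
  fixes F :: "'a::{real_inner,heine_borel} set" and \<theta> y :: "nat \<Rightarrow> 'a"
  assumes "closed F" "\<theta> 1 \<in> F"
    and "\<And>t. t \<in> {1..T} \<Longrightarrow> \<theta> (t + 1) = closest_point F (y t)"
    and "t \<in> {1..T + 1}"
  shows "\<theta> t \<in> F"
proof (cases "t = 1")
  case False
  with assms(4) have "t - 1 \<in> {1..T}" "t = t - 1 + 1"
    by auto
  with assms(3) have "\<theta> t = closest_point F (y (t - 1))"
    by metis
  moreover have "F \<noteq> {}"
    using assms(2) by auto
  ultimately show ?thesis
    using closest_point_in_set[OF assms(1)] by simp
qed (use assms(2) in simp)

lemma closest_point_gradient_step:
  fixes F :: "'a::euclidean_space set"
  assumes "convex F" "closed F" "z \<in> F" "a > 0"
  shows "g \<bullet> (x - z) \<le> ((norm (x - z))\<^sup>2 - (norm (closest_point F (x - a *\<^sub>R g) - z))\<^sup>2) / (2 * a)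
                         + a * (norm g)\<^sup>2 / 2"
proof -
  have "norm (closest_point F (x - a *\<^sub>R g) - z) \<le> norm (x - a *\<^sub>R g - z)"
    using closest_point_lipschitz[OF assms(1,2), of "x - a *\<^sub>R g" z] closest_point_self[OF assms(3)]
      assms(3) by (auto simp: dist_norm)
  then have "(norm (closest_point F (x - a *\<^sub>R g) - z))\<^sup>2 \<le> (norm (x - a *\<^sub>R g - z))\<^sup>2"
    by (intro power_mono) auto
  also have "\<dots> = (norm (x - z))\<^sup>2 - 2 * a * (g \<bullet> (x - z)) + a\<^sup>2 * (norm g)\<^sup>2"
    unfolding power2_norm_eq_inner
    by (simp add: inner_diff_left inner_diff_right inner_commute algebra_simps power2_eq_square)
  finally show ?thesis
    using \<open>a > 0\<close> by (simp add: field_simps power2_eq_square)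
qed

lemma sum_mono_weights_telescope_le:
  fixes b \<delta> :: "nat \<Rightarrow> real"
  assumes "n \<ge> 1" and b_mono: "mono_on {1..n} b" and b_nonneg: "\<And>t. t \<in> {1..n} \<Longrightarrow> 0 \<le> b t"
    and \<delta>_nonneg: "\<And>t. t \<in> {1..n + 1} \<Longrightarrow> 0 \<le> \<delta> t"
    and \<delta>_le: "\<And>t. t \<in> {1..n + 1} \<Longrightarrow> \<delta> t \<le> M"
  shows "(\<Sum>t=1..n. b t * (\<delta> t - \<delta> (t + 1))) \<le> b n * M"
proof -
  have partial: "(\<Sum>t=1..m. b t * (\<delta> t - \<delta> (t + 1))) \<le> b m * (M - \<delta> (m + 1))"
    if "1 \<le> m" "m \<le> n" for m
    using that
  proof (induction m rule: nat_induct_at_least)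
    case base
    then show ?case
      using b_nonneg[of 1] \<delta>_le[of 1] by (simp add: mult_left_mono)
  next
    case (Suc m)
    have "b m * (M - \<delta> (m + 1)) \<le> b (m + 1) * (M - \<delta> (m + 1))"
      using mono_onD[OF b_mono, of m "m + 1"] \<delta>_le[of "m + 1"] Suc.hyps Suc.prems
      by (intro mult_right_mono) auto
    with Suc show ?case
      by (simp add: algebra_simps)
  qed
  moreover have "0 \<le> b n * \<delta> (n + 1)"
    using b_nonneg[of n] \<delta>_nonneg[of "n + 1"] \<open>n \<ge> 1\<close> by simp
  ultimately show ?thesis
    using partial[OF \<open>n \<ge> 1\<close> order_refl] by (simp add: right_diff_distrib)
qed

lemma running_max_mono_on:
  fixes u w :: "nat \<Rightarrow> 'a::linorder"
  assumes "\<And>t. t \<in> {1..T} \<Longrightarrow> u t = max (u (t - 1)) (w t)"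
  shows "mono_on {1..T} u"
proof (intro mono_onI)
  fix s t assume s: "s \<in> {1..T}" and "t \<in> {1..T}" "s \<le> t"
  from \<open>s \<le> t\<close> \<open>t \<in> {1..T}\<close> show "u s \<le> u t"
  proof (induction t rule: dec_induct)
    case (step n)
    then show ?case
      using s assms[of "Suc n"] by (simp add: le_max_iff_disj)
  qed simp
qed

lemma adaptive_step_sizes_antimono_on:
  fixes vhat :: "nat \<Rightarrow> real"
  assumes "c \<ge> 0" "mono_on {1..T} vhat" "vhat 1 > 0"
  shows "antimono_on {1..T} (\<lambda>t. c / sqrt (real t * vhat t))"
proof (intro monotone_onI)
  fix s t assume s: "s \<in> {1..T}" and t: "t \<in> {1..T}" and "s \<le> t"
  have "0 < vhat s"
    using mono_onD[OF assms(2), of 1 s] s \<open>vhat 1 > 0\<close> by simp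
  moreover have "vhat s \<le> vhat t"
    using mono_onD[OF assms(2) s t \<open>s \<le> t\<close>] .
  ultimately have "0 < real s * vhat s" "real s * vhat s \<le> real t * vhat t"
    using s \<open>s \<le> t\<close> by (auto intro!: mult_mono)
  then show "c / sqrt (real t * vhat t) \<le> c / sqrt (real s * vhat s)"
    using \<open>c \<ge> 0\<close> by (auto intro!: divide_left_mono)
qed

lemma projected_gradient_descent_regret:
  fixes F :: "'a::euclidean_space set" and \<theta> g :: "nat \<Rightarrow> 'a" and a :: "nat \<Rightarrow> real"
  assumes "convex F" "closed F" "z \<in> F" "\<theta> 1 \<in> F" "T \<ge> 1"
    and radius: "\<And>x. x \<in> F \<Longrightarrow> (norm (x - z))\<^sup>2 \<le> M"
    and step_pos: "\<And>t. t \<in> {1..T} \<Longrightarrow> a t > 0"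
    and step_antimono: "antimono_on {1..T} a"
    and iterate: "\<And>t. t \<in> {1..T} \<Longrightarrow> \<theta> (t + 1) = closest_point F (\<theta> t - a t *\<^sub>R g t)"
  shows "(\<Sum>t=1..T. g t \<bullet> (\<theta> t - z)) \<le> M / (2 * a T) + (\<Sum>t=1..T. a t * (norm (g t))\<^sup>2) / 2"
proof -
  define \<delta> where "\<delta> t = (norm (\<theta> t - z))\<^sup>2" for t
  have \<delta>_le: "\<delta> t \<le> M" if "t \<in> {1..T + 1}" for t
    unfolding \<delta>_def using radius closest_point_iterate_in[OF assms(2,4) iterate that] by simp
  have weights_mono: "mono_on {1..T} (\<lambda>t. 1 / (2 * a t))"
    using step_pos monotone_onD[OF step_antimono]
    by (intro mono_onI) (auto intro!: divide_left_mono mult_pos_pos)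
  have "(\<Sum>t=1..T. g t \<bullet> (\<theta> t - z))
      \<le> (\<Sum>t=1..T. 1 / (2 * a t) * (\<delta> t - \<delta> (t + 1)) + a t * (norm (g t))\<^sup>2 / 2)"
    using closest_point_gradient_step[OF assms(1-3) step_pos] iterate
    by (intro sum_mono) (simp add: \<delta>_def)
  also have "\<dots> = (\<Sum>t=1..T. 1 / (2 * a t) * (\<delta> t - \<delta> (t + 1))) + (\<Sum>t=1..T. a t * (norm (g t))\<^sup>2) / 2"
    by (simp add: sum.distrib sum_divide_distrib)
  also have "(\<Sum>t=1..T. 1 / (2 * a t) * (\<delta> t - \<delta> (t + 1))) \<le> 1 / (2 * a T) * M"
    using step_pos \<delta>_le by (intro sum_mono_weights_telescope_le[OF \<open>T \<ge> 1\<close> weights_mono])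
      (auto simp: \<delta>_def less_imp_le)
  finally show ?thesis
    by simp
qed

lemma sum_adaptive_step_sizes_le:
  fixes q vhat :: "nat \<Rightarrow> real"
  assumes "T \<ge> 1" "c \<ge> 0" "vhat 1 > 0"
    and vhat_ge: "\<And>t. t \<in> {1..T} \<Longrightarrow> vhat 1 \<le> vhat t"
    and q_bound: "\<And>t. t \<in> {1..T} \<Longrightarrow> 0 \<le> q t \<and> q t \<le> Q"
  shows "(\<Sum>t=1..T. c / sqrt (real t * vhat t) * q t) \<le> c * Q * (2 * sqrt (real T) - 1) / sqrt (vhat 1)"
proof -
  have "c / sqrt (real t * vhat t) * q t \<le> c * Q / sqrt (vhat 1) * (1 / sqrt (real t))"
    if t: "t \<in> {1..T}" for t
  proof -
    have "c / sqrt (real t * vhat t) \<le> c / (sqrt (real t) * sqrt (vhat 1))"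
      using t vhat_ge[OF t] \<open>vhat 1 > 0\<close> \<open>c \<ge> 0\<close>
      by (auto simp: real_sqrt_mult intro!: divide_left_mono mult_left_mono)
    then have "c / sqrt (real t * vhat t) * q t \<le> c / (sqrt (real t) * sqrt (vhat 1)) * Q"
      using q_bound[OF t] \<open>c \<ge> 0\<close> \<open>vhat 1 > 0\<close> by (intro mult_mono) auto
    then show ?thesis
      by (simp add: mult.commute)
  qed
  then have "(\<Sum>t=1..T. c / sqrt (real t * vhat t) * q t) \<le> c * Q / sqrt (vhat 1) * (\<Sum>t=1..T. 1 / sqrt (real t))"
    unfolding sum_distrib_left by (rule sum_mono) simp
  also have "\<dots> \<le> c * Q / sqrt (vhat 1) * (2 * sqrt (real T) - 1)"
    using sum_inverse_sqrt_le[OF \<open>T \<ge> 1\<close>] q_bound[of 1] \<open>T \<ge> 1\<close> \<open>c \<ge> 0\<close> \<open>vhat 1 > 0\<close>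
    by (intro mult_left_mono) auto
  finally show ?thesis
    by simp
qed

lemma adasgdmax_linearized_regret_pos:
  fixes F :: "'a::euclidean_space set" and \<theta> g :: "nat \<Rightarrow> 'a" and vhat :: "nat \<Rightarrow> real"
    and \<eta> D G :: real
  assumes "convex F" "closed F" "z \<in> F" "\<theta> 1 \<in> F" "T \<ge> 1" "\<eta> > 0" "D > 0" "G > 0"
    and diam: "\<And>x. x \<in> F \<Longrightarrow> infnorm (x - z) \<le> D"
    and grad_bound: "\<And>t. t \<in> {1..T} \<Longrightarrow> infnorm (g t) \<le> G"
    and vhat_mono: "mono_on {1..T} vhat" and vhat1_pos: "vhat 1 > 0"
    and iterate: "\<And>t. t \<in> {1..T} \<Longrightarrow>
          \<theta> (t + 1) = closest_point F (\<theta> t - (\<eta> * D / (G * sqrt (real t * vhat t))) *\<^sub>R g t)"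
  shows "(\<Sum>t=1..T. g t \<bullet> (\<theta> t - z))
           \<le> DIM('a) * D * G * sqrt (vhat T * real T) / (2 * \<eta>)
             + DIM('a) * D * G * \<eta> * (2 * sqrt (real T) - 1) / (2 * sqrt (vhat 1))"
proof -
  define d where "d = real DIM('a)"
  define c where "c = \<eta> * D / G"
  define a where "a t = c / sqrt (real t * vhat t)" for t
  have "c > 0"
    using assms(6-8) unfolding c_def by simp
  have vhat_ge: "vhat 1 \<le> vhat t" if "t \<in> {1..T}" for t
    using mono_onD[OF vhat_mono] that \<open>T \<ge> 1\<close> by simp
  have a_pos: "a t > 0" if "t \<in> {1..T}" for t
    using \<open>c > 0\<close> vhat1_pos vhat_ge[OF that] that unfolding a_def by auto
  have a_antimono: "antimono_on {1..T} a"
    unfolding a_def using adaptive_step_sizes_antimono_on \<open>c > 0\<close> vhat_mono vhat1_pos by simp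
  have radius: "(norm (x - z))\<^sup>2 \<le> d * D\<^sup>2" if "x \<in> F" for x
    using infnorm_le_imp_norm_power2_le[OF diam[OF that]] unfolding d_def .
  have iterate_a: "\<theta> (t + 1) = closest_point F (\<theta> t - a t *\<^sub>R g t)" if "t \<in> {1..T}" for t
    using iterate[OF that] unfolding a_def c_def by simp
  have "(\<Sum>t=1..T. g t \<bullet> (\<theta> t - z)) \<le> d * D\<^sup>2 / (2 * a T) + (\<Sum>t=1..T. a t * (norm (g t))\<^sup>2) / 2"
    by (rule projected_gradient_descent_regret[where g = g, OF assms(1-5) radius a_pos a_antimono iterate_a])
  also have "(\<Sum>t=1..T. a t * (norm (g t))\<^sup>2) \<le> c * (d * G\<^sup>2) * (2 * sqrt (real T) - 1) / sqrt (vhat 1)"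
    unfolding a_def using \<open>c > 0\<close> infnorm_le_imp_norm_power2_le[OF grad_bound] unfolding d_def
    by (intro sum_adaptive_step_sizes_le[where vhat = vhat, OF \<open>T \<ge> 1\<close> _ vhat1_pos vhat_ge]) auto
  also have "d * D\<^sup>2 / (2 * a T) = d * D * G * sqrt (vhat T * real T) / (2 * \<eta>)"
    using assms(6-8) unfolding a_def c_def
    by (simp add: power2_eq_square mult.commute[of "real T"])
  also have "c * (d * G\<^sup>2) * (2 * sqrt (real T) - 1) / sqrt (vhat 1) / 2
      = d * D * G * \<eta> * (2 * sqrt (real T) - 1) / (2 * sqrt (vhat 1))"
    using \<open>G > 0\<close> unfolding c_def by (simp add: power2_eq_square mult_ac)
  finally show ?thesis
    unfolding d_def by simp
qed

lemma adasgdmax_linearized_regret: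
  fixes F :: "'a::euclidean_space set" and \<theta> g :: "nat \<Rightarrow> 'a" and vhat :: "nat \<Rightarrow> real"
    and \<eta> G :: real
  assumes "convex F" "closed F" "bounded F" "z \<in> F" "\<theta> 1 \<in> F" "T \<ge> 1" "\<eta> > 0"
    and grad_bound: "\<And>t. t \<in> {1..T} \<Longrightarrow> infnorm (g t) \<le> G"
    and vhat_mono: "mono_on {1..T} vhat" and vhat1_pos: "vhat 1 > 0"
    and iterate: "\<And>t. t \<in> {1..T} \<Longrightarrow>
          \<theta> (t + 1) = closest_point F (\<theta> t - (\<eta> * linf_diam F / (G * sqrt (real t * vhat t))) *\<^sub>R g t)"
  shows "(\<Sum>t=1..T. g t \<bullet> (\<theta> t - z))
           \<le> DIM('a) * linf_diam F * G * sqrt (vhat T * real T) / (2 * \<eta>)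
             + DIM('a) * linf_diam F * G * \<eta> * (2 * sqrt (real T) - 1) / (2 * sqrt (vhat 1))"
    (is "_ \<le> ?bound")
proof -
  have diam: "infnorm (x - z) \<le> linf_diam F" if "x \<in> F" for x
    using infnorm_le_linf_diam[OF assms(3) that assms(4)] .
  have "0 \<le> G"
    using grad_bound[of 1] infnorm_pos_le[of "g 1"] \<open>T \<ge> 1\<close> by simp
  moreover have "0 \<le> linf_diam F"
    using diam[OF assms(4)] infnorm_pos_le[of "z - z"] by linarith
  ultimately consider "linf_diam F = 0 \<or> G = 0" | "linf_diam F > 0" "G > 0"
    by linarith
  then show ?thesis
  proof cases
    case 1
    \<comment> \<open>The step size is then 0 (for G = 0 by the convention x / 0 = 0), so the descent
      estimate is unavailable; instead every linear term vanishes, as g t = 0 or theta t = z.\<close>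
    have "1 \<le> sqrt (real T)"
      using \<open>T \<ge> 1\<close> by simp
    then have "1 \<le> 2 * sqrt (real T)"
      by linarith
    then have "0 \<le> ?bound"
      using \<open>0 \<le> linf_diam F\<close> \<open>0 \<le> G\<close> \<open>\<eta> > 0\<close> vhat1_pos mono_onD[OF vhat_mono, of 1 T] \<open>T \<ge> 1\<close>
      by (intro add_nonneg_nonneg divide_nonneg_nonneg mult_nonneg_nonneg) auto
    moreover have "g t \<bullet> (\<theta> t - z) = 0" if "t \<in> {1..T}" for t
    proof -
      have "\<theta> t \<in> F"
        using that by (intro closest_point_iterate_in[OF assms(2,5) iterate]) auto
      then show ?thesis
        using 1 diam grad_bound[OF that] infnorm_pos_le[of "\<theta> t - z"] infnorm_pos_le[of "g t"]
        by (force simp: infnorm_eq_0)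
    qed
    ultimately show ?thesis
      by simp
  next
    case 2
    show ?thesis
      by (rule adasgdmax_linearized_regret_pos[OF assms(1,2,4-7) 2 diam grad_bound vhat_mono vhat1_pos iterate])
  qed
qed

theorem corollary3p2p1:
  fixes F :: "(real ^ 'd) set"
    and f :: "nat \<Rightarrow> real ^ 'd \<Rightarrow> real"
    and g :: "nat \<Rightarrow> real ^ 'd \<Rightarrow> real ^ 'd"
    and \<theta> :: "nat \<Rightarrow> real ^ 'd"
    and v vhat :: "nat \<Rightarrow> real"
    and T :: nat and \<beta>2 \<eta> G :: real
  assumes F_convex: "convex F" and F_closed: "closed F" and F_bounded: "bounded F"
    and T_pos: "T \<ge> 1"
    and f_convex: "\<And>t. t \<in> {1..T} \<Longrightarrow> convex_on F (f t)"
    and grad: "\<And>t x. t \<in> {1..T} \<Longrightarrow> x \<in> F \<Longrightarrow>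
                 (f t has_derivative (\<lambda>h. g t x \<bullet> h)) (at x)"
    and grad_bound: "\<And>t x. t \<in> {1..T} \<Longrightarrow> x \<in> F \<Longrightarrow> infnorm (g t x) \<le> G"
    and beta2: "0 \<le> \<beta>2" "\<beta>2 < 1"
    and eta_pos: "\<eta> > 0"
    and v0: "v 0 = 0" and vhat0: "vhat 0 = 0"
    and v_rec: "\<And>t. t \<in> {1..T} \<Longrightarrow>
                  v t = \<beta>2 * v (t - 1) + (1 - \<beta>2) * (norm (g t (\<theta> t)))\<^sup>2"
    and vhat_rec: "\<And>t. t \<in> {1..T} \<Longrightarrow> vhat t = max (vhat (t - 1)) (v t)"
    and theta1: "\<theta> 1 \<in> F"
    and theta_rec: "\<And>t. t \<in> {1..T} \<Longrightarrow>
          \<theta> (t + 1) = closest_point F (\<theta> t -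
             (\<eta> * linf_diam F / (G * sqrt (real t * vhat t))) *\<^sub>R g t (\<theta> t))"
    and vhat1_pos: "vhat 1 > 0"
  shows "\<forall>\<theta>s\<in>F. (\<Sum>t=1..T. f t (\<theta> t)) - (\<Sum>t=1..T. f t \<theta>s)
           \<le> real CARD('d) * linf_diam F * G * sqrt (vhat T * real T) / (2 * \<eta>)
             + real CARD('d) * linf_diam F * G * \<eta> * (2 * sqrt (real T) - 1)
               / (2 * sqrt (vhat 1))"
proof -
  have \<theta>_in: "\<theta> t \<in> F" if "t \<in> {1..T}" for t
    using that by (intro closest_point_iterate_in[OF F_closed theta1 theta_rec]) auto
  have vhat_mono: "mono_on {1..T} vhat"
    using vhat_rec by (rule running_max_mono_on)
  have regret_le_linearized:
    "(\<Sum>t=1..T. f t (\<theta> t)) - (\<Sum>t=1..T. f t z) \<le> (\<Sum>t=1..T. g t (\<theta> t) \<bullet> (\<theta> t - z))"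
    if "z \<in> F" for z
    unfolding sum_subtractf[symmetric]
  proof (rule sum_mono)
    fix t assume t: "t \<in> {1..T}"
    from convex_on_above_tangent[OF f_convex[OF t] grad[OF t \<theta>_in[OF t]] \<theta>_in[OF t] \<open>z \<in> F\<close>]
    show "f t (\<theta> t) - f t z \<le> g t (\<theta> t) \<bullet> (\<theta> t - z)"
      by (simp add: inner_diff_right)
  qed
  show ?thesis
    using order_trans[OF regret_le_linearized adasgdmax_linearized_regret[OF F_convex F_closed F_bounded _
        theta1 T_pos eta_pos grad_bound[OF _ \<theta>_in] vhat_mono vhat1_pos theta_rec]]
    by simp
qed

end
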